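(* Let $a\ge b\ge1$ be integers with either $b\ge2$, or $b=1$ and $a\ge5$, and $A=\begin{pmatrix}2&-a\\-b&2\end{pmatrix}$. For $i=1,2$: (1) if $b\ge2$, then $\beta_i^j-\beta_i^k$ is an imaginary root for all $j\ne k$, and $\beta_1^j-\beta_2^k$ is never a root for any $j,k\in\mathbb Z_+$; (2) if $b=1$ and $a\ge5$, then $\beta_i^j-\beta_i^k$ is an imaginary root when $|j-k|>1$, and $\beta_i^j-\beta_i^{j+1}$ is a real root; moreover $\beta_1^j-\beta_2^k$ is a root if and only if it is a real root if and only if $j=1$ and $k=0$. In particular, $\beta_i^j-\beta_i^k$ is always a root for $j\ne k$, $i=1,2$.
   Context: Let $\mathfrak g(A)$ be the Kac–Moody algebra of $A$, with simple roots $\alpha_1,\alpha_2$ and root system $\Delta$; a root $\alpha$ is real if $(\alpha,\alpha)>0$ and imaginary if $(\alpha,\alpha)\le0$, for the invariant form with $(\alpha_1,\alpha_1)=2$, $(\alpha_2,\alpha_2)=2a/b$, $(\alpha_1,\alpha_2)=-a$. $\mathbb Z_+=\{0,1,2,\dots\}$. Define $c_0=d_0=0$, $c_1=d_1=1$, $c_{k+2}+c_k=a d_{k+1}$, $d_{k+2}+d_k=b c_{k+1}$, and $\beta_1^j=c_j\alpha_1+d_{j+1}\alpha_2$, $\beta_2^j=c_{j+1}\alpha_1+d_j\alpha_2$ ($j\in\mathbb Z_+$); these are exactly the positive real roots. *)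

theory Defs
  imports Complex_Main
begin

text \<open>Roots of the rank-2 Kac--Moody algebra g(A), A = [[2,-a],[-b,2]], are encoded as
  integer coordinate pairs (m,n) meaning m*alpha1 + n*alpha2.
  The root system is given by Kac's description (Kac, Infinite-dimensional Lie algebras,
  Prop. 5.1 and Thm. 5.4): real roots = W-orbit of the simple roots;
  positive imaginary roots = W-orbit of the fundamental set K; imaginary roots = those and
  their negatives.\<close>

definition refl1 :: "int \<Rightarrow> int \<Rightarrow> int \<times> int \<Rightarrow> int \<times> int" where
  "refl1 a b v = (- fst v + a * snd v, snd v)"

definition refl2 :: "int \<Rightarrow> int \<Rightarrow> int \<times> int \<Rightarrow> int \<times> int" where
  "refl2 a b v = (fst v, b * fst v - snd v)"

inductive_set weyl_orbit :: "int \<Rightarrow> int \<Rightarrow> (int \<times> int) set \<Rightarrow> (int \<times> int) set"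
  for a b :: int and S :: "(int \<times> int) set" where
  base: "v \<in> S \<Longrightarrow> v \<in> weyl_orbit a b S"
| s1: "v \<in> weyl_orbit a b S \<Longrightarrow> refl1 a b v \<in> weyl_orbit a b S"
| s2: "v \<in> weyl_orbit a b S \<Longrightarrow> refl2 a b v \<in> weyl_orbit a b S"

text \<open>Kac's fundamental set K: nonzero elements of Q_+ with connected support and
  <alpha, alpha_i^vee> <= 0 for i = 1,2.\<close>
definition fund_set :: "int \<Rightarrow> int \<Rightarrow> (int \<times> int) set" where
  "fund_set a b = {(m, n). m \<ge> 0 \<and> n \<ge> 0 \<and> (m, n) \<noteq> (0, 0)
      \<and> (m = 0 \<or> n = 0 \<or> a \<noteq> 0)
      \<and> 2 * m - a * n \<le> 0 \<and> 2 * n - b * m \<le> 0}"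

definition root_system :: "int \<Rightarrow> int \<Rightarrow> (int \<times> int) set" where
  "root_system a b =
     weyl_orbit a b {(1, 0), (0, 1)} \<union> weyl_orbit a b (fund_set a b)
     \<union> {v. (- fst v, - snd v) \<in> weyl_orbit a b (fund_set a b)}"

text \<open>Invariant form: (a1,a1)=2, (a2,a2)=2a/b, (a1,a2)=-a.\<close>
definition inv_form :: "int \<Rightarrow> int \<Rightarrow> int \<times> int \<Rightarrow> real" where
  "inv_form a b v = 2 * (of_int (fst v))^2 + 2 * of_int a / of_int b * (of_int (snd v))^2
      - 2 * of_int a * of_int (fst v) * of_int (snd v)"

definition is_root :: "int \<Rightarrow> int \<Rightarrow> int \<times> int \<Rightarrow> bool" where
  "is_root a b v \<longleftrightarrow> v \<in> root_system a b"

definition real_root :: "int \<Rightarrow> int \<Rightarrow> int \<times> int \<Rightarrow> bool" where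
  "real_root a b v \<longleftrightarrow> is_root a b v \<and> inv_form a b v > 0"

definition imag_root :: "int \<Rightarrow> int \<Rightarrow> int \<times> int \<Rightarrow> bool" where
  "imag_root a b v \<longleftrightarrow> is_root a b v \<and> inv_form a b v \<le> 0"

fun cd :: "int \<Rightarrow> int \<Rightarrow> nat \<Rightarrow> int \<times> int" where
  "cd a b 0 = (0, 0)"
| "cd a b (Suc 0) = (1, 1)"
| "cd a b (Suc (Suc k)) =
     (a * snd (cd a b (Suc k)) - fst (cd a b k), b * fst (cd a b (Suc k)) - snd (cd a b k))"

definition cseq :: "int \<Rightarrow> int \<Rightarrow> nat \<Rightarrow> int" where "cseq a b k = fst (cd a b k)"
definition dseq :: "int \<Rightarrow> int \<Rightarrow> nat \<Rightarrow> int" where "dseq a b k = snd (cd a b k)"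

definition beta :: "int \<Rightarrow> int \<Rightarrow> nat \<Rightarrow> nat \<Rightarrow> int \<times> int" where
  "beta a b i j = (if i = 1 then (cseq a b j, dseq a b (j + 1)) else (cseq a b (j + 1), dseq a b j))"

definition vdiff :: "int \<times> int \<Rightarrow> int \<times> int \<Rightarrow> int \<times> int" where
  "vdiff u v = (fst u - fst v, snd u - snd v)"

end

(*
  The integer form qf a b v = b (v, v) / 2 is invariant under the simple reflections,
  takes the value b on the Weyl group orbit of alpha1 and a on that of alpha2, and is nonpositive
  on Kac's fundamental set. Conversely, for a >= b >= 1 a nonzero v with qf v <= 0 is an imaginary
  root and a v with qf v = b is a real root: a nonnegative such v can be reflected, lowering its
  height, until it lies in the fundamental chamber or is a simple root.

  So it suffices to evaluate qf on the differences. Since beta_1^(k+1) = s2 beta_2^k,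
  beta_2^(k+1) = s1 beta_1^k, and exchanging a and b swaps the two families, invariance reduces
  qf (beta_i^j - beta_i^k) to qf (alpha2 - beta_1^|j-k|) for the parameters (a, b) or (b, a), and
  qf (beta_1^j - beta_2^k) to the cases j <= 1. These are explicit in c_k and d_k, whose increments
  over two steps grow because c_(k+4) = (a b - 2) c_(k+2) - c_k. Same-type differences get
  qf = a + b - a b if |j - k| = 1 and qf <= 0 otherwise; different-type ones get qf > a >= b, so
  they are not roots, except beta_1^1 - beta_2^0 = b alpha2.
*)
theory Submission
  imports Defs
begin

section \<open>Roots and the quadratic form\<close>

definition qf :: "int \<Rightarrow> int \<Rightarrow> int \<times> int \<Rightarrow> int" where
  "qf a b v = b * fst v ^ 2 + a * snd v ^ 2 - a * b * fst v * snd v"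

lemma inv_form_eq_qf: "0 < b \<Longrightarrow> inv_form a b v = 2 * of_int (qf a b v) / of_int b"
  unfolding inv_form_def qf_def by (simp add: field_simps power2_eq_square)

lemma inv_form_pos_iff: "0 < b \<Longrightarrow> 0 < inv_form a b v \<longleftrightarrow> 0 < qf a b v"
  by (simp add: inv_form_eq_qf zero_less_divide_iff)

lemma inv_form_nonpos_iff: "0 < b \<Longrightarrow> inv_form a b v \<le> 0 \<longleftrightarrow> qf a b v \<le> 0"
  using inv_form_pos_iff[of b a v] by linarith

lemma qf_refl1 [simp]: "qf a b (refl1 a b v) = qf a b v"
  unfolding qf_def refl1_def by (simp add: power2_eq_square algebra_simps)

lemma qf_refl2 [simp]: "qf a b (refl2 a b v) = qf a b v"
  unfolding qf_def refl2_def by (simp add: power2_eq_square algebra_simps)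

lemma qf_uminus [simp]: "qf a b (- fst v, - snd v) = qf a b v"
  unfolding qf_def by (simp add: power2_eq_square)

lemma qf_swap [simp]: "qf a b (prod.swap v) = qf b a v"
  unfolding qf_def by (simp add: algebra_simps)

lemma qf_vdiff_commute: "qf a b (vdiff u v) = qf a b (vdiff v u)"
  using qf_uminus[of a b "vdiff u v"] by (simp add: vdiff_def)

lemma refl1_refl1 [simp]: "refl1 a b (refl1 a b v) = v"
  and refl2_refl2 [simp]: "refl2 a b (refl2 a b v) = v"
  by (simp_all add: refl1_def refl2_def)

lemma qf_vdiff_refl1 [simp]: "qf a b (vdiff (refl1 a b u) (refl1 a b v)) = qf a b (vdiff u v)"
  and qf_vdiff_refl2 [simp]: "qf a b (vdiff (refl2 a b u) (refl2 a b v)) = qf a b (vdiff u v)"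
  using qf_refl1[of a b "vdiff u v"] qf_refl2[of a b "vdiff u v"]
  by (simp_all add: refl1_def refl2_def vdiff_def algebra_simps)

lemma vdiff_swap: "vdiff (prod.swap u) (prod.swap v) = prod.swap (vdiff u v)"
  by (simp add: vdiff_def)

lemma qf_vdiff_alpha2: "qf a b (vdiff (0, 1) v) = qf a b v + a - a * (2 * snd v - b * fst v)"
  by (simp add: qf_def vdiff_def power2_eq_square algebra_simps)

lemma qf_vdiff_alpha1: "qf a b (vdiff (1, 0) v) = qf a b v + b - b * (2 * fst v - a * snd v)"
  by (simp add: qf_def vdiff_def power2_eq_square algebra_simps)

lemma qf_weyl_orbit: "v \<in> weyl_orbit a b S \<Longrightarrow> \<exists>w\<in>S. qf a b v = qf a b w"
  by (induction rule: weyl_orbit.induct) auto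

lemma qf_fund_set_nonpos:
  assumes "0 \<le> a" "0 \<le> b" "v \<in> fund_set a b"
  shows "qf a b v \<le> 0"
proof -
  obtain m n where v: "v = (m, n)" and "0 \<le> m" "0 \<le> n" "2 * m - a * n \<le> 0" "2 * n - b * m \<le> 0"
    using assms(3) unfolding fund_set_def by auto
  then have "(b * m) * (2 * m - a * n) \<le> 0" "(a * n) * (2 * n - b * m) \<le> 0"
    using assms by (simp_all add: mult_nonneg_nonpos)
  moreover have "2 * qf a b v = (b * m) * (2 * m - a * n) + (a * n) * (2 * n - b * m)"
    unfolding v qf_def by (simp add: power2_eq_square algebra_simps)
  ultimately show ?thesis by linarith
qed

lemma qf_root_cases:
  assumes "0 \<le> a" "0 \<le> b" "is_root a b v"
  shows "qf a b v \<le> 0 \<or> qf a b v = a \<or> qf a b v = b"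
proof -
  consider (real) "v \<in> weyl_orbit a b {(1, 0), (0, 1)}" | (pos) "v \<in> weyl_orbit a b (fund_set a b)"
    | (neg) "(- fst v, - snd v) \<in> weyl_orbit a b (fund_set a b)"
    using assms(3) unfolding is_root_def root_system_def by blast
  then show ?thesis
  proof cases
    case real
    then obtain w where "w \<in> {(1, 0), (0, 1)}" "qf a b v = qf a b w"
      by (blast dest: qf_weyl_orbit)
    then show ?thesis by (auto simp: qf_def)
  next
    case pos
    then show ?thesis by (metis qf_weyl_orbit qf_fund_set_nonpos assms(1,2))
  next
    case neg
    then show ?thesis by (metis qf_weyl_orbit qf_fund_set_nonpos qf_uminus assms(1,2))
  qed
qed

lemma weyl_orbit_simple_uminus:
  "v \<in> weyl_orbit a b {(1, 0), (0, 1)} \<Longrightarrow> (- fst v, - snd v) \<in> weyl_orbit a b {(1, 0), (0, 1)}"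
proof (induction rule: weyl_orbit.induct)
  case (base v)
  have "(-1, 0) = refl1 a b (1, 0)" "(0, -1) = refl2 a b (0, 1)"
    by (simp_all add: refl1_def refl2_def)
  then show ?case
    using base weyl_orbit.base[of _ "{(1, 0), (0, 1)}"] weyl_orbit.s1 weyl_orbit.s2 by auto
next
  case (s1 v)
  then show ?case using weyl_orbit.s1[OF s1.IH] by (simp add: refl1_def)
next
  case (s2 v)
  then show ?case using weyl_orbit.s2[OF s2.IH] by (simp add: refl2_def)
qed

lemma qf_le_same_sign:
  assumes "1 \<le> a" "1 \<le> b" "qf a b (m, n) \<le> b"
  shows "(0 \<le> m \<and> 0 \<le> n) \<or> (m \<le> 0 \<and> n \<le> 0)"
proof (rule ccontr)
  assume "\<not> ?thesis"
  then have "m * n < 0" "0 < m\<^sup>2" "0 < n\<^sup>2"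
    by (auto simp: mult_less_0_iff)
  then have "1 \<le> m\<^sup>2" "1 \<le> n\<^sup>2" "1 \<le> - (m * n)" by linarith+
  then have "b \<le> b * m\<^sup>2" "a \<le> a * n\<^sup>2" "a * b \<le> a * b * - (m * n)"
    using assms mult_left_mono[of 1 _ b] mult_left_mono[of 1 _ a]
      mult_left_mono[of 1 "- (m * n)" "a * b"]
    by simp_all
  moreover have "qf a b (m, n) = b * m\<^sup>2 + a * n\<^sup>2 + a * b * - (m * n)"
    by (simp add: qf_def)
  moreover have "0 < a * b" using assms by simp
  ultimately show False using assms by linarith
qed

lemma weyl_orbit_descent:
  assumes step: "\<And>m n. 0 \<le> m \<Longrightarrow> 0 \<le> n \<Longrightarrow> P (m, n) \<Longrightarrow> (m, n) \<notin> S \<Longrightarrow>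
      (0 \<le> a * n - m \<and> a * n - m < m \<and> P (a * n - m, n))
    \<or> (0 \<le> b * m - n \<and> b * m - n < n \<and> P (m, b * m - n))"
  shows "0 \<le> m \<Longrightarrow> 0 \<le> n \<Longrightarrow> P (m, n) \<Longrightarrow> (m, n) \<in> weyl_orbit a b S"
proof (induction "nat (m + n)" arbitrary: m n rule: less_induct)
  case less
  show ?case
  proof (cases "(m, n) \<in> S")
    case True
    then show ?thesis by (rule weyl_orbit.base)
  next
    case False
    then consider "0 \<le> a * n - m" "a * n - m < m" "P (a * n - m, n)"
      | "0 \<le> b * m - n" "b * m - n < n" "P (m, b * m - n)"
      using step less.prems by blast
    then show ?thesis
    proof cases
      case 1
      then have "(a * n - m, n) \<in> weyl_orbit a b S" using less by simp
      from weyl_orbit.s1[OF this] show ?thesis by (simp add: refl1_def)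
    next
      case 2
      then have "(m, b * m - n) \<in> weyl_orbit a b S" using less by simp
      from weyl_orbit.s2[OF this] show ?thesis by (simp add: refl2_def)
    qed
  qed
qed

lemma le_mult_if_qf_less:
  assumes "0 \<le> a" "0 \<le> b" "0 \<le> m" "0 \<le> n" "qf a b (m, n) < b + a * n\<^sup>2"
  shows "m \<le> a * n"
proof (rule ccontr)
  assume "\<not> ?thesis"
  moreover have "0 \<le> a * n" using assms by simp
  ultimately have "1 \<le> m * (m - a * n)"
    using mult_mono[of 1 m 1 "m - a * n"] by simp
  then have "b \<le> b * m * (m - a * n)"
    using assms(2) mult_left_mono[of 1 _ b] by (simp add: mult.assoc)
  moreover have "qf a b (m, n) = b * m * (m - a * n) + a * n\<^sup>2"
    by (simp add: qf_def power2_eq_square algebra_simps)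
  ultimately show False using assms(5) by linarith
qed

lemma orbit_fund_set_if_qf_nonpos:
  assumes "1 \<le> a" "1 \<le> b" "0 \<le> m" "0 \<le> n" "(m, n) \<noteq> (0, 0)" "qf a b (m, n) \<le> 0"
  shows "(m, n) \<in> weyl_orbit a b (fund_set a b)"
proof (rule weyl_orbit_descent[where P = "\<lambda>v. v \<noteq> (0, 0) \<and> qf a b v \<le> 0"])
  fix m n :: int
  assume "0 \<le> m" "0 \<le> n" and P: "(m, n) \<noteq> (0, 0) \<and> qf a b (m, n) \<le> 0"
    and "(m, n) \<notin> fund_set a b"
  then have dir: "0 < 2 * m - a * n \<or> 0 < 2 * n - b * m"
    using assms(1) by (auto simp: fund_set_def)
  have "0 \<le> a * n\<^sup>2" "0 \<le> b * m\<^sup>2" using assms by simp_all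
  moreover have "qf b a (n, m) = qf a b (m, n)"
    using qf_swap[of b a "(m, n)"] by simp
  ultimately have "qf a b (m, n) < b + a * n\<^sup>2" "qf b a (n, m) < a + b * m\<^sup>2"
    using P assms(1,2) by linarith+
  then have "m \<le> a * n" "n \<le> b * m"
    using le_mult_if_qf_less[of a b m n] le_mult_if_qf_less[of b a n m]
      assms(1,2) \<open>0 \<le> m\<close> \<open>0 \<le> n\<close> by simp_all
  moreover have "qf a b (a * n - m, n) = qf a b (m, n)" "qf a b (m, b * m - n) = qf a b (m, n)"
    using qf_refl1[of a b "(m, n)"] qf_refl2[of a b "(m, n)"] by (simp_all add: refl1_def refl2_def)
  ultimately show "(0 \<le> a * n - m \<and> a * n - m < m \<and> (a * n - m, n) \<noteq> (0, 0) \<and> qf a b (a * n - m, n) \<le> 0)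
    \<or> (0 \<le> b * m - n \<and> b * m - n < n \<and> (m, b * m - n) \<noteq> (0, 0) \<and> qf a b (m, b * m - n) \<le> 0)"
    using P dir by auto
qed (use assms in auto)

lemma orbit_simple_if_qf_eq:
  assumes "1 \<le> b" "b \<le> a" "0 \<le> m" "0 \<le> n" "qf a b (m, n) = b"
  shows "(m, n) \<in> weyl_orbit a b {(1, 0), (0, 1)}"
proof (rule weyl_orbit_descent[where P = "\<lambda>v. qf a b v = b"])
  fix m n :: int
  assume "0 \<le> m" "0 \<le> n" and Q: "qf a b (m, n) = b" and "(m, n) \<notin> {(1, 0), (0, 1)}"
  have "(m, n) \<notin> fund_set a b"
    using Q qf_fund_set_nonpos[of a b "(m, n)"] assms(1,2) by auto
  then have dir: "0 < 2 * m - a * n \<or> 0 < 2 * n - b * m"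
    using Q assms(1,2) \<open>0 \<le> m\<close> \<open>0 \<le> n\<close> by (auto simp: fund_set_def qf_def)
  have "n \<noteq> 0" if "0 < 2 * m - a * n"
  proof
    assume "n = 0"
    then have "m\<^sup>2 = 1" using Q assms(1) by (simp add: qf_def)
    then show False using \<open>n = 0\<close> \<open>0 \<le> m\<close> \<open>(m, n) \<notin> {(1, 0), (0, 1)}\<close>
      by (simp add: power2_eq_1_iff)
  qed
  moreover have "m \<noteq> 0" if "0 < 2 * n - b * m"
  proof
    assume "m = 0"
    then have "a * n\<^sup>2 = b" using Q by (simp add: qf_def)
    then have "a * n\<^sup>2 \<le> a * 1" using assms(2) by simp
    then have "n\<^sup>2 \<le> 1" using assms(1,2) mult_le_cancel_left_pos[of a "n\<^sup>2" 1] by simp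
    moreover have "0 < n" using that \<open>m = 0\<close> by simp
    ultimately have "n = 1" by (simp add: abs_square_le_1)
    then show False using \<open>m = 0\<close> \<open>(m, n) \<notin> {(1, 0), (0, 1)}\<close> by simp
  qed
  moreover have "m \<le> a * n" if "n \<noteq> 0"
    using le_mult_if_qf_less[of a b m n] Q assms \<open>0 \<le> m\<close> \<open>0 \<le> n\<close> that by simp
  moreover have "n \<le> b * m" if "m \<noteq> 0"
  proof -
    have "0 < m\<^sup>2" using that by simp
    then have "b * 1 \<le> b * m\<^sup>2" using assms(1) by (intro mult_left_mono) linarith+
    moreover have "qf b a (n, m) = b" using Q by (simp add: qf_def algebra_simps)
    ultimately have "qf b a (n, m) < a + b * m\<^sup>2" using assms(1,2) by linarith
    then show ?thesis using le_mult_if_qf_less[of b a n m] assms \<open>0 \<le> m\<close> \<open>0 \<le> n\<close> by simp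
  qed
  moreover have "qf a b (a * n - m, n) = b" "qf a b (m, b * m - n) = b"
    using Q qf_refl1[of a b "(m, n)"] qf_refl2[of a b "(m, n)"] by (simp_all add: refl1_def refl2_def)
  ultimately show "(0 \<le> a * n - m \<and> a * n - m < m \<and> qf a b (a * n - m, n) = b)
    \<or> (0 \<le> b * m - n \<and> b * m - n < n \<and> qf a b (m, b * m - n) = b)"
    using dir by auto
qed (use assms in auto)

lemma imag_root_if_qf_nonpos:
  assumes "1 \<le> a" "1 \<le> b" "v \<noteq> (0, 0)" "qf a b v \<le> 0"
  shows "imag_root a b v"
proof -
  obtain m n where v: "v = (m, n)" by fastforce
  have "is_root a b v"
  proof (cases "0 \<le> m \<and> 0 \<le> n")
    case True
    then show ?thesis
      using orbit_fund_set_if_qf_nonpos assms unfolding v is_root_def root_system_def by blast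
  next
    case False
    then have "0 \<le> - m" "0 \<le> - n"
      using qf_le_same_sign[of a b m n] assms v by auto
    moreover have "qf a b (- m, - n) \<le> 0" using assms(4) qf_uminus[of a b v] v by simp
    ultimately show ?thesis
      using orbit_fund_set_if_qf_nonpos[of a b "- m" "- n"] assms
      unfolding v is_root_def root_system_def by auto
  qed
  then show ?thesis using assms inv_form_nonpos_iff[of b a v] by (simp add: imag_root_def)
qed

lemma real_root_if_qf_eq:
  assumes "1 \<le> b" "b \<le> a" "qf a b v = b"
  shows "real_root a b v"
proof -
  obtain m n where v: "v = (m, n)" by fastforce
  have "is_root a b v"
  proof (cases "0 \<le> m \<and> 0 \<le> n")
    case True
    then show ?thesis
      using orbit_simple_if_qf_eq assms unfolding v is_root_def root_system_def by blast
  next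
    case False
    then have "0 \<le> - m" "0 \<le> - n"
      using qf_le_same_sign[of a b m n] assms v by auto
    moreover have "qf a b (- m, - n) = b" using assms(3) qf_uminus[of a b v] v by simp
    ultimately have "(- m, - n) \<in> weyl_orbit a b {(1, 0), (0, 1)}"
      using orbit_simple_if_qf_eq assms by blast
    from weyl_orbit_simple_uminus[OF this] show ?thesis
      unfolding v is_root_def root_system_def by simp
  qed
  then show ?thesis using assms inv_form_pos_iff[of b a v] by (simp add: real_root_def)
qed

section \<open>Weyl group symmetries of the real roots\<close>

lemma cd_swap: "cd b a k = prod.swap (cd a b k)"
  by (induction a b k rule: cd.induct) auto

lemma dseq_eq_cseq_swap: "dseq a b k = cseq b a k"
  unfolding cseq_def dseq_def cd_swap[of b a k] by simp

lemma cseq_Suc_Suc: "cseq a b (Suc (Suc k)) = a * dseq a b (Suc k) - cseq a b k"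
  and dseq_Suc_Suc: "dseq a b (Suc (Suc k)) = b * cseq a b (Suc k) - dseq a b k"
  by (simp_all add: cseq_def dseq_def)

lemma beta2_eq_swap_beta1: "beta a b 2 j = prod.swap (beta b a 1 j)"
  by (simp add: beta_def dseq_eq_cseq_swap)

lemma refl1_beta1: "refl1 a b (beta a b 1 k) = beta a b 2 (Suc k)"
  by (simp add: beta_def refl1_def cseq_Suc_Suc)

lemma refl2_beta2: "refl2 a b (beta a b 2 k) = beta a b 1 (Suc k)"
  by (simp add: beta_def refl2_def dseq_Suc_Suc)

lemma beta1_Suc: "beta a b 1 (Suc j) = refl2 a b (prod.swap (beta b a 1 j))"
  by (simp only: refl2_beta2 flip: beta2_eq_swap_beta1)

lemma qf_beta1: "qf a b (beta a b 1 j) = (if even j then a else b)"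
proof (induction j arbitrary: a b)
  case 0
  then show ?case by (simp add: beta_def cseq_def dseq_def qf_def)
next
  case (Suc j)
  then show ?case by (simp only: beta1_Suc qf_refl2 qf_swap) simp
qed

lemma qf_vdiff_beta1_Suc:
  "qf a b (vdiff (beta a b 1 (Suc j)) (beta a b 1 (Suc k))) = qf b a (vdiff (beta b a 1 j) (beta b a 1 k))"
  by (simp only: beta1_Suc qf_vdiff_refl2 vdiff_swap qf_swap)

lemma beta1_Suc_eq_iff: "beta a b 1 (Suc j) = beta a b 1 (Suc k) \<longleftrightarrow> beta b a 1 j = beta b a 1 k"
  by (metis beta1_Suc refl2_refl2 swap_swap)

lemma qf_vdiff_beta1_adjacent: "qf a b (vdiff (beta a b 1 j) (beta a b 1 (Suc j))) = a + b - a * b"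
proof (induction j arbitrary: a b)
  case 0
  then show ?case
    by (simp add: beta_def cseq_def dseq_def qf_def vdiff_def power2_eq_square algebra_simps)
next
  case (Suc j)
  then show ?case by (simp only: qf_vdiff_beta1_Suc) (simp add: algebra_simps)
qed

section \<open>Growth of the sequence \<open>c\<^sub>k\<close>\<close>

lemma cseq_add_4: "cseq a b (k + 4) = (a * b - 2) * cseq a b (k + 2) - cseq a b k"
proof -
  have "cseq a b (k + 4) = a * (b * cseq a b (k + 2) - dseq a b (k + 1)) - cseq a b (k + 2)"
    by (simp add: cseq_Suc_Suc dseq_Suc_Suc numeral_eq_Suc)
  moreover have "a * dseq a b (k + 1) = cseq a b (k + 2) + cseq a b k"
    by (simp add: cseq_Suc_Suc numeral_eq_Suc)
  ultimately show ?thesis by (simp add: algebra_simps)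
qed

lemma cseq_diff_add_2:
  "cseq a b (k + 4) - cseq a b (k + 2) = (cseq a b (k + 2) - cseq a b k) + (a * b - 4) * cseq a b (k + 2)"
  using cseq_add_4[of a b k] by (simp add: algebra_simps)

lemma cseq_nonneg_le_add_2:
  assumes "0 \<le> a" "4 \<le> a * b"
  shows "0 \<le> cseq a b k \<and> cseq a b k \<le> cseq a b (k + 2)"
proof (induction k rule: nat_induct2)
  case (step k)
  then have "0 \<le> (a * b - 4) * cseq a b (k + 2)" using assms by simp
  moreover have "cseq a b (k + 2 + 2) = cseq a b (k + 4)" by (simp add: numeral_eq_Suc)
  ultimately show ?case using step cseq_diff_add_2[of a b k] by linarith
qed (use assms in \<open>simp_all add: cseq_def numeral_eq_Suc\<close>)

lemma cseq_diff_mono: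
  assumes "0 \<le> a" "4 \<le> a * b"
  shows "cseq a b (k + 2) - cseq a b k \<le> cseq a b (k + 2 * p + 2) - cseq a b (k + 2 * p)"
proof (induction p)
  case (Suc p)
  define m where "m = k + 2 * p"
  have "0 \<le> (a * b - 4) * cseq a b (m + 2)" using cseq_nonneg_le_add_2[OF assms] assms by simp
  then have "cseq a b (m + 2) - cseq a b m \<le> cseq a b (m + 4) - cseq a b (m + 2)"
    using cseq_diff_add_2[of a b m] by linarith
  moreover have "cseq a b (k + 2) - cseq a b k \<le> cseq a b (m + 2) - cseq a b m"
    using Suc by (simp add: m_def)
  moreover have "cseq a b (k + 2 * Suc p) = cseq a b (m + 2)"
    "cseq a b (k + 2 * Suc p + 2) = cseq a b (m + 4)"
    by (simp_all add: m_def numeral_eq_Suc)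
  ultimately show ?case by linarith
qed simp

lemma cseq_pos:
  assumes "1 \<le> a" "4 \<le> a * b" "0 < k"
  shows "1 \<le> cseq a b k"
  using assms(3)
proof (induction k rule: nat_induct2)
  case (step k)
  then show ?case
    using cseq_nonneg_le_add_2[of a b k] assms by (cases "k = 0") (simp_all add: cseq_def numeral_eq_Suc)
qed (simp_all add: cseq_def)

lemma beta1_neq:
  assumes "1 \<le> a" "1 \<le> b" "4 \<le> a * b"
  shows "beta a b 1 j \<noteq> beta a b 1 (j + Suc r)"
  using assms
proof (induction j arbitrary: a b)
  case 0
  then have "1 \<le> fst (beta a b 1 (Suc r))" using cseq_pos[of a b "Suc r"] by (simp add: beta_def)
  moreover have "fst (beta a b 1 0) = 0" by (simp add: beta_def cseq_def)
  ultimately show ?case by auto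
next
  case (Suc j)
  then have "beta b a 1 j \<noteq> beta b a 1 (j + Suc r)" by (simp add: mult.commute)
  then show ?case using beta1_Suc_eq_iff[of a b j "j + Suc r"] by simp
qed

lemma inj_beta1:
  assumes "1 \<le> a" "1 \<le> b" "4 \<le> a * b"
  shows "inj (beta a b 1)"
proof (rule injI, rule ccontr)
  fix j k assume eq: "beta a b 1 j = beta a b 1 k" and "j \<noteq> k"
  then consider "j < k" | "k < j" by linarith
  then show False
  proof cases
    case 1
    then obtain r where "k = Suc (j + r)" using less_imp_Suc_add by auto
    then show False using eq beta1_neq[OF assms, of j r] by simp
  next
    case 2
    then obtain r where "j = Suc (k + r)" using less_imp_Suc_add by auto
    then show False using eq beta1_neq[OF assms, of k r] by simp
  qed
qed

section \<open>Differences of real roots of the same type\<close>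

lemma qf_vdiff_beta1_0_Suc:
  "qf a b (vdiff (beta a b 1 0) (beta a b 1 (Suc r)))
     = qf a b (beta a b 1 (Suc r)) + a - a * (dseq a b (r + 2) - dseq a b r)"
proof -
  have "beta a b 1 0 = (0, 1)" by (simp add: beta_def cseq_def dseq_def)
  moreover have "2 * snd (beta a b 1 (Suc r)) - b * fst (beta a b 1 (Suc r)) = dseq a b (r + 2) - dseq a b r"
    by (simp add: beta_def dseq_Suc_Suc)
  ultimately show ?thesis by (simp add: qf_vdiff_alpha2)
qed

text \<open>For \<open>a, b \<ge> 1\<close> the condition \<open>5 \<le> a * b \<or> a = 2 \<and> b = 2\<close> says that the Cartan matrix is
  hyperbolic or of affine type A_1^(1). It excludes the affine type A_2^(2), \<open>{a, b} = {1, 4}\<close>, where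
  \<open>\<alpha>\<^sub>2 - \<beta>\<^sub>1\<^sup>3\<close> has \<open>qf = 1 > 0\<close>.\<close>

lemma hyperbolic_or_affine_A11:
  fixes a b :: int
  assumes "b \<le> a" "1 \<le> b" "2 \<le> b \<or> b = 1 \<and> 5 \<le> a"
  shows "5 \<le> a * b \<or> a = 2 \<and> b = 2"
proof (cases "b = 1")
  case False
  then have "2 * 2 \<le> a * b" using assms by (intro mult_mono) simp_all
  moreover have "3 * 2 \<le> a * b" if "a \<noteq> 2" using that False assms by (intro mult_mono) simp_all
  ultimately show ?thesis using False assms by fastforce
qed (use assms in simp)

lemma add_le_mult_mult_diff_3:
  fixes a b :: int
  assumes "1 \<le> a" "1 \<le> b" "5 \<le> a * b \<or> a = 2 \<and> b = 2"
  shows "a + b \<le> a * b * (a * b - 3)"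
  using assms(3)
proof
  assume ab: "5 \<le> a * b"
  have "0 \<le> (a - 1) * (b - 1)" using assms(1,2) by simp
  moreover have "a * b * 2 \<le> a * b * (a * b - 3)" using ab by (intro mult_left_mono) simp_all
  ultimately show ?thesis using ab by (simp add: algebra_simps)
qed simp

lemma qf_vdiff_beta1_0_nonpos:
  assumes "1 \<le> a" "1 \<le> b" "5 \<le> a * b \<or> a = 2 \<and> b = 2" "2 \<le> r"
  shows "qf a b (vdiff (beta a b 1 0) (beta a b 1 r)) \<le> 0"
proof -
  have ab: "4 \<le> a * b" "4 \<le> b * a" using assms(3) by (auto simp: mult.commute)
  have "\<exists>q p. r = Suc (q + 2 * p) \<and> (q = 1 \<or> q = 2)"
    using assms(4) by presburger
  then obtain q p where r: "r = Suc (q + 2 * p)" and q: "q = 1 \<or> q = 2" by blast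
  let ?D = "dseq a b (q + 2 * p + 2) - dseq a b (q + 2 * p)"
  have D: "qf a b (vdiff (beta a b 1 0) (beta a b 1 r)) = qf a b (beta a b 1 r) + a - a * ?D"
    unfolding r by (rule qf_vdiff_beta1_0_Suc)
  have mono: "cseq b a (q + 2) - cseq b a q \<le> ?D"
    unfolding dseq_eq_cseq_swap using cseq_diff_mono[of b a q p] assms(2) ab by simp
  from q show ?thesis
  proof
    assume "q = 1"
    then have "even r" using r by simp
    then have "qf a b (beta a b 1 r) = a" using qf_beta1[of a b r] by simp
    moreover have "a * b - 2 \<le> ?D"
      using mono \<open>q = 1\<close> by (simp add: cseq_def numeral_eq_Suc mult.commute)
    then have "a * 2 \<le> a * ?D" using assms(1) ab by (intro mult_left_mono) simp_all
    ultimately show ?thesis using D by linarith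
  next
    assume "q = 2"
    then have "odd r" using r by simp
    then have "qf a b (beta a b 1 r) = b" using qf_beta1[of a b r] by simp
    moreover have "b * (a * b - 3) \<le> ?D"
      using mono \<open>q = 2\<close> by (simp add: cseq_def numeral_eq_Suc algebra_simps)
    then have "a * (b * (a * b - 3)) \<le> a * ?D" using assms(1) by (intro mult_left_mono) simp_all
    ultimately show ?thesis
      using D add_le_mult_mult_diff_3[OF assms(1-3)] by (simp add: mult.assoc)
  qed
qed

lemma qf_vdiff_beta1_nonpos_of_add_2_le:
  assumes "1 \<le> a" "1 \<le> b" "5 \<le> a * b \<or> a = 2 \<and> b = 2" "j + 2 \<le> k"
  shows "qf a b (vdiff (beta a b 1 j) (beta a b 1 k)) \<le> 0"
  using assms
proof (induction j arbitrary: a b k)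
  case 0
  then show ?case using qf_vdiff_beta1_0_nonpos by simp
next
  case (Suc j)
  then obtain k' where "k = Suc k'" "j + 2 \<le> k'" by (cases k) auto
  moreover have "5 \<le> b * a \<or> b = 2 \<and> a = 2" using Suc.prems(3) by (auto simp: mult.commute)
  ultimately show ?case
    using Suc.IH[of b a k'] Suc.prems(1,2) unfolding \<open>k = Suc k'\<close> qf_vdiff_beta1_Suc by simp
qed

lemma qf_vdiff_beta1_nonpos:
  assumes "1 \<le> a" "1 \<le> b" "5 \<le> a * b \<or> a = 2 \<and> b = 2" "j \<noteq> k"
    and "2 \<le> \<bar>int j - int k\<bar> \<or> 2 \<le> a \<and> 2 \<le> b"
  shows "qf a b (vdiff (beta a b 1 j) (beta a b 1 k)) \<le> 0"
proof -
  have adjacent: "a + b - a * b \<le> 0" if "2 \<le> a" "2 \<le> b"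
  proof -
    have "1 * 1 \<le> (a - 1) * (b - 1)" using that by (intro mult_mono) simp_all
    then show ?thesis by (simp add: algebra_simps)
  qed
  have less: "qf a b (vdiff (beta a b 1 j) (beta a b 1 k)) \<le> 0"
    if "j < k" "2 \<le> \<bar>int j - int k\<bar> \<or> 2 \<le> a \<and> 2 \<le> b" for j k
  proof (cases "k = Suc j")
    case True
    then show ?thesis using that adjacent qf_vdiff_beta1_adjacent[of a b j] by auto
  next
    case False
    then show ?thesis using that qf_vdiff_beta1_nonpos_of_add_2_le[OF assms(1-3), of j k] by simp
  qed
  show ?thesis
    using less[of j k] less[of k j] assms(4,5) qf_vdiff_commute
    by (metis abs_minus_commute linorder_neqE_nat)
qed

lemma imag_root_vdiff_beta:
  assumes "1 \<le> a" "1 \<le> b" "5 \<le> a * b \<or> a = 2 \<and> b = 2" "i \<in> {1, 2}" "j \<noteq> k"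
    and "2 \<le> \<bar>int j - int k\<bar> \<or> 2 \<le> a \<and> 2 \<le> b"
  shows "imag_root a b (vdiff (beta a b i j) (beta a b i k))"
proof (rule imag_root_if_qf_nonpos[OF assms(1,2)])
  have swapped: "1 \<le> b" "1 \<le> a" "5 \<le> b * a \<or> b = 2 \<and> a = 2"
    "2 \<le> \<bar>int j - int k\<bar> \<or> 2 \<le> b \<and> 2 \<le> a"
    using assms by (auto simp: mult.commute)
  have "4 \<le> a * b" using assms(3) by auto
  then have "beta a b 1 j \<noteq> beta a b 1 k" "beta b a 1 j \<noteq> beta b a 1 k"
    using inj_beta1[of a b] inj_beta1[of b a] assms(1,2,5) by (auto simp: mult.commute dest: injD)
  then show "vdiff (beta a b i j) (beta a b i k) \<noteq> (0, 0)"
    using assms(4) by (auto simp: vdiff_def beta2_eq_swap_beta1 prod_eq_iff)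
  show "qf a b (vdiff (beta a b i j) (beta a b i k)) \<le> 0"
    using assms(4) qf_vdiff_beta1_nonpos[OF assms(1-3,5,6)]
      qf_vdiff_beta1_nonpos[OF swapped(1-3) assms(5) swapped(4)]
    by (auto simp: beta2_eq_swap_beta1 vdiff_swap)
qed

lemma real_root_vdiff_beta:
  assumes "1 \<le> a" "i \<in> {1, 2}" "\<bar>int j - int k\<bar> = 1"
  shows "real_root a 1 (vdiff (beta a 1 i j) (beta a 1 i k))"
proof (rule real_root_if_qf_eq)
  have "k = Suc j \<or> j = Suc k" using assms(3) by linarith
  then have "qf a' b' (vdiff (beta a' b' 1 j) (beta a' b' 1 k)) = a' + b' - a' * b'" for a' b'
    using qf_vdiff_beta1_adjacent qf_vdiff_commute by metis
  then show "qf a 1 (vdiff (beta a 1 i j) (beta a 1 i k)) = 1"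
    using assms(2) by (auto simp: beta2_eq_swap_beta1 vdiff_swap)
qed (use assms in simp_all)

lemma is_root_vdiff_beta:
  assumes "1 \<le> b" "b \<le> a" "5 \<le> a * b \<or> a = 2 \<and> b = 2" "i \<in> {1, 2}" "j \<noteq> k"
  shows "is_root a b (vdiff (beta a b i j) (beta a b i k))"
proof (cases "2 \<le> \<bar>int j - int k\<bar> \<or> 2 \<le> b")
  case True
  then show ?thesis using imag_root_vdiff_beta[of a b i j k] assms by (auto simp: imag_root_def)
next
  case False
  then have "b = 1" "\<bar>int j - int k\<bar> = 1" using assms(1,5) by auto
  then show ?thesis using real_root_vdiff_beta[of a i j k] assms by (simp add: real_root_def)
qed

section \<open>Differences of real roots of different types\<close>

lemma qf_vdiff_beta_mixed_add_2:
  "qf a b (vdiff (beta a b 1 (j + 2)) (beta a b 2 k)) = qf a b (vdiff (beta a b 1 j) (beta a b 2 (k + 2)))"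
proof -
  have "beta a b 1 (j + 2) = refl2 a b (refl1 a b (beta a b 1 j))"
    by (simp only: refl1_beta1 refl2_beta2 add_2_eq_Suc')
  moreover have "beta a b 2 k = refl2 a b (refl1 a b (beta a b 2 (k + 2)))"
    by (simp only: add_2_eq_Suc' flip: refl1_beta1 refl2_beta2) simp
  ultimately show ?thesis by simp
qed

lemma qf_vdiff_beta_mixed_shift:
  "qf a b (vdiff (beta a b 1 (q + 2 * p)) (beta a b 2 k)) = qf a b (vdiff (beta a b 1 q) (beta a b 2 (k + 2 * p)))"
proof (induction p arbitrary: k)
  case (Suc p)
  have "q + 2 * Suc p = q + 2 * p + 2" "k + 2 * Suc p = k + 2 + 2 * p" by simp_all
  then show ?case using Suc[of "k + 2"] by (simp only: qf_vdiff_beta_mixed_add_2)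
qed simp

lemma qf_vdiff_beta_mixed_0:
  "qf a b (vdiff (beta a b 1 0) (beta a b 2 n))
     = a + (if even n then b else a) + a * (dseq a b (n + 2) - dseq a b n)"
proof -
  have \<alpha>2: "beta a b 1 0 = (0, 1)" by (simp add: beta_def cseq_def dseq_def)
  have qf: "qf a b (beta a b 2 n) = (if even n then b else a)"
    using qf_beta1[of b a n] by (simp add: beta2_eq_swap_beta1)
  have pairing: "2 * snd (beta a b 2 n) - b * fst (beta a b 2 n) = dseq a b n - dseq a b (n + 2)"
    by (simp add: beta_def dseq_Suc_Suc)
  show ?thesis by (simp only: \<alpha>2 qf_vdiff_alpha2 qf pairing) (simp add: algebra_simps)
qed

lemma qf_vdiff_beta_mixed_1:
  "qf a b (vdiff (beta a b 1 1) (beta a b 2 n))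
     = b + (if even n then b else a) + b * (cseq a b (n + 3) - cseq a b (n + 1))"
proof -
  have "refl2 a b (beta a b 1 1) = (1, 0)"
    by (simp add: beta_def refl2_def cseq_def dseq_def numeral_eq_Suc)
  then have "qf a b (vdiff (beta a b 1 1) (beta a b 2 n)) = qf a b (vdiff (1, 0) (beta a b 1 (n + 1)))"
    using qf_vdiff_refl2[of a b "beta a b 1 1" "beta a b 2 n"] by (simp add: refl2_beta2)
  moreover have "qf a b (beta a b 1 (n + 1)) = (if even n then b else a)"
    using qf_beta1[of a b "n + 1"] by simp
  moreover have
    "2 * fst (beta a b 1 (n + 1)) - a * snd (beta a b 1 (n + 1)) = cseq a b (n + 1) - cseq a b (n + 3)"
    by (simp add: beta_def cseq_Suc_Suc numeral_eq_Suc)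
  ultimately show ?thesis by (simp only: qf_vdiff_alpha1) (simp add: algebra_simps)
qed

lemma less_mult_diff_2_squared:
  fixes a b :: int
  assumes "1 \<le> a" "1 \<le> b" "5 \<le> a * b \<or> a = 2 \<and> b = 2"
  shows "a < b * (a * b - 2)\<^sup>2"
  using assms(3)
proof
  assume ab: "5 \<le> a * b"
  have "a \<le> a * b" using assms mult_left_mono[of 1 b a] by simp
  moreover have "(a * b - 2) * 3 \<le> (a * b - 2) * (a * b - 2)"
    using ab by (intro mult_left_mono) simp_all
  then have "3 * (a * b) - 6 \<le> (a * b - 2)\<^sup>2" by (simp add: power2_eq_square algebra_simps)
  moreover have "(a * b - 2)\<^sup>2 \<le> b * (a * b - 2)\<^sup>2"
    using assms(2) mult_right_mono[of 1 b "(a * b - 2)\<^sup>2"] by simp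
  ultimately show ?thesis using ab by linarith
qed simp

lemma qf_vdiff_beta_mixed_gt:
  assumes "1 \<le> a" "1 \<le> b" "5 \<le> a * b \<or> a = 2 \<and> b = 2" "\<not> (b = 1 \<and> j = 1 \<and> k = 0)"
  shows "a < qf a b (vdiff (beta a b 1 j) (beta a b 2 k))"
proof -
  have ab: "4 \<le> a * b" "4 \<le> b * a" using assms(3) by (auto simp: mult.commute)
  define n where "n = k + 2 * (j div 2)"
  have M: "qf a b (vdiff (beta a b 1 j) (beta a b 2 k)) = qf a b (vdiff (beta a b 1 (j mod 2)) (beta a b 2 n))"
    using qf_vdiff_beta_mixed_shift[of a b "j mod 2" "j div 2" k] by (simp add: n_def)
  consider "j mod 2 = 0" | "j mod 2 = 1" by linarith
  then show ?thesis
  proof cases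
    case 1
    have "0 \<le> dseq a b (n + 2) - dseq a b n"
      using cseq_nonneg_le_add_2[of b a n] assms(2) ab by (simp add: dseq_eq_cseq_swap)
    then have "0 \<le> a * (dseq a b (n + 2) - dseq a b n)" using assms(1) by simp
    then show ?thesis using M 1 assms(1,2) qf_vdiff_beta_mixed_0[of a b n] by simp
  next
    case 2
    let ?\<Delta> = "cseq a b (n + 3) - cseq a b (n + 1)"
    have M1: "qf a b (vdiff (beta a b 1 j) (beta a b 2 k)) = b + (if even n then b else a) + b * ?\<Delta>"
      using M 2 qf_vdiff_beta_mixed_1[of a b n] by simp
    have "n + 1 + 2 = n + 3" by simp
    then have "cseq a b (n + 1 + 2) = cseq a b (n + 3)" by (rule arg_cong)
    then have "0 \<le> ?\<Delta>" using cseq_nonneg_le_add_2[of a b "n + 1"] assms(1) ab by linarith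
    then have "0 \<le> b * ?\<Delta>" using assms(2) by simp
    have "odd n \<or> n = 0 \<or> (\<exists>p. n = 2 * p + 2)" by presburger
    then consider "odd n" | "n = 0" | p where "n = 2 * p + 2" by blast
    then show ?thesis
    proof cases
      case 1
      then show ?thesis using M1 \<open>0 \<le> b * ?\<Delta>\<close> assms(2) by simp
    next
      case 2
      then have "b \<noteq> 1" using assms(4) \<open>j mod 2 = 1\<close> n_def by auto
      have "?\<Delta> = a * b - 2" using \<open>n = 0\<close> by (simp add: cseq_def numeral_eq_Suc)
      moreover have "even n" using \<open>n = 0\<close> by simp
      ultimately have "qf a b (vdiff (beta a b 1 j) (beta a b 2 k)) = b + b + b * (a * b - 2)"
        using M1 by simp
      then have "qf a b (vdiff (beta a b 1 j) (beta a b 2 k)) = a * b * b"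
        by (simp add: algebra_simps)
      moreover have "a * 1 < a * (b * b)"
        using assms(1,2) \<open>b \<noteq> 1\<close> by (intro mult_strict_left_mono) (simp_all add: less_1_mult)
      ultimately show ?thesis by (simp add: mult.assoc)
    next
      case 3
      have idx: "n + 3 = 3 + 2 * p + 2" "n + 1 = 3 + 2 * p" using \<open>n = 2 * p + 2\<close> by simp_all
      have "cseq a b (3 + 2) - cseq a b 3 \<le> ?\<Delta>"
        unfolding idx by (intro cseq_diff_mono) (use assms(1) ab in simp_all)
      moreover have "cseq a b (3 + 2) - cseq a b 3 = (a * b - 2)\<^sup>2 - 2"
        by (simp add: cseq_def numeral_eq_Suc power2_eq_square algebra_simps)
      ultimately have "b * ((a * b - 2)\<^sup>2 - 2) \<le> b * ?\<Delta>"
        using assms(2) by (intro mult_left_mono) simp_all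
      moreover have "even n" using \<open>n = 2 * p + 2\<close> by simp
      ultimately have "b * (a * b - 2)\<^sup>2 \<le> qf a b (vdiff (beta a b 1 j) (beta a b 2 k))"
        using M1 by (simp add: algebra_simps)
      then show ?thesis using less_mult_diff_2_squared[OF assms(1-3)] by linarith
    qed
  qed
qed

lemma not_root_vdiff_beta_mixed:
  assumes "1 \<le> b" "b \<le> a" "5 \<le> a * b \<or> a = 2 \<and> b = 2" "\<not> (b = 1 \<and> j = 1 \<and> k = 0)"
  shows "\<not> is_root a b (vdiff (beta a b 1 j) (beta a b 2 k))"
proof
  let ?v = "vdiff (beta a b 1 j) (beta a b 2 k)"
  assume "is_root a b ?v"
  then have "qf a b ?v \<le> 0 \<or> qf a b ?v = a \<or> qf a b ?v = b"
    using qf_root_cases[of a b ?v] assms(1,2) by simp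
  moreover have "a < qf a b ?v" using qf_vdiff_beta_mixed_gt[of a b j k] assms by simp
  ultimately show False using assms(1,2) by linarith
qed

lemma root_vdiff_beta_mixed_iff:
  assumes "5 \<le> a"
  shows "(is_root a 1 (vdiff (beta a 1 1 j) (beta a 1 2 k)) \<longleftrightarrow> real_root a 1 (vdiff (beta a 1 1 j) (beta a 1 2 k)))
    \<and> (real_root a 1 (vdiff (beta a 1 1 j) (beta a 1 2 k)) \<longleftrightarrow> j = 1 \<and> k = 0)"
proof (cases "j = 1 \<and> k = 0")
  case True
  have "vdiff (beta a 1 1 1) (beta a 1 2 0) = (0, 1)"
    by (simp add: beta_def cseq_def dseq_def vdiff_def numeral_eq_Suc)
  moreover have "(0, 1) \<in> weyl_orbit a 1 {(1, 0), (0, 1)}" by (simp add: weyl_orbit.base)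
  ultimately show ?thesis
    using True assms inv_form_pos_iff[of 1 a "(0, 1)"]
    by (simp add: real_root_def is_root_def root_system_def qf_def)
next
  case False
  then show ?thesis using not_root_vdiff_beta_mixed[of 1 a j k] assms by (simp add: real_root_def)
qed

theorem proposition3p7:
  fixes a b :: int
  assumes "a \<ge> b" and "b \<ge> 1" and "b \<ge> 2 \<or> (b = 1 \<and> a \<ge> 5)"
  shows
    "(b \<ge> 2 \<longrightarrow>
        (\<forall>i\<in>{1, 2}. \<forall>j k. j \<noteq> k \<longrightarrow> imag_root a b (vdiff (beta a b i j) (beta a b i k)))
      \<and> (\<forall>j k. \<not> is_root a b (vdiff (beta a b 1 j) (beta a b 2 k))))
   \<and> (b = 1 \<and> a \<ge> 5 \<longrightarrow>
        (\<forall>i\<in>{1, 2}. \<forall>j k. \<bar>int j - int k\<bar> > 1 \<longrightarrow> imag_root a b (vdiff (beta a b i j) (beta a b i k)))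
      \<and> (\<forall>i\<in>{1, 2}. \<forall>j. real_root a b (vdiff (beta a b i j) (beta a b i (j + 1))))
      \<and> (\<forall>j k. (is_root a b (vdiff (beta a b 1 j) (beta a b 2 k))
                  \<longleftrightarrow> real_root a b (vdiff (beta a b 1 j) (beta a b 2 k)))
               \<and> (real_root a b (vdiff (beta a b 1 j) (beta a b 2 k)) \<longleftrightarrow> j = 1 \<and> k = 0)))
   \<and> (\<forall>i\<in>{1, 2}. \<forall>j k. j \<noteq> k \<longrightarrow> is_root a b (vdiff (beta a b i j) (beta a b i k)))"
proof -
  have a: "1 \<le> a" using assms(1,2) by simp
  note type = hyperbolic_or_affine_A11[OF assms]
  note imag = imag_root_vdiff_beta[OF a assms(2) type]
  show ?thesis
  proof (intro conjI impI ballI allI)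
    fix i j k :: nat assume "2 \<le> b" "i \<in> {1, 2}" "j \<noteq> k"
    then show "imag_root a b (vdiff (beta a b i j) (beta a b i k))" using imag assms(1) by simp
  next
    fix j k :: nat assume "2 \<le> b"
    then show "\<not> is_root a b (vdiff (beta a b 1 j) (beta a b 2 k))"
      using not_root_vdiff_beta_mixed[OF assms(2,1) type] by simp
  next
    fix i j k :: nat assume "i \<in> {1, 2}" "1 < \<bar>int j - int k\<bar>"
    then show "imag_root a b (vdiff (beta a b i j) (beta a b i k))" using imag by simp
  next
    fix i j :: nat assume "b = 1 \<and> 5 \<le> a" "i \<in> {1, 2}"
    then show "real_root a b (vdiff (beta a b i j) (beta a b i (j + 1)))"
      using real_root_vdiff_beta[OF a] by simp
  next
    fix j k :: nat assume "b = 1 \<and> 5 \<le> a"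
    then show "is_root a b (vdiff (beta a b 1 j) (beta a b 2 k))
        \<longleftrightarrow> real_root a b (vdiff (beta a b 1 j) (beta a b 2 k))"
      "real_root a b (vdiff (beta a b 1 j) (beta a b 2 k)) \<longleftrightarrow> j = 1 \<and> k = 0"
      using root_vdiff_beta_mixed_iff[of a j k] by simp_all
  qed (rule is_root_vdiff_beta[OF assms(2,1) type])
qed

end
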